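(* Let $Z_+=\{z\in\mathbb{Z}: z>0\}$ and $Z_-=\mathbb{Z}\setminus Z_+$. Let $K$ be an infinite compact (Hausdorff) group. Let $D=K^{Z_-}$ carry the discrete topology and $C=K^{Z_+}$ carry the Tychonoff product topology, both with coordinatewise group operations. Then the topological group $G=D\times C$ (identified with $K^{\mathbb{Z}}$ as a group, with the product topology of $D$ and $C$) is not $g$-reversible; specifically, the right shift $f((x_n)_{n\in\mathbb{Z}})=(x_{n-1})_{n\in\mathbb{Z}}$ is a continuous automorphism of $G$ which is not open.
   Context: All topological groups are assumed Hausdorff. A topological group $G$ is called $g$-reversible if every continuous automorphism of $G$ (i.e. every continuous group isomorphism of $G$ onto itself) is an open map. *)

theory Defs
  imports "HOL-Analysis.Analysis" "HOL-Algebra.Algebra"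
begin

definition topological_group :: "('a, 'b) monoid_scheme \<Rightarrow> 'a topology \<Rightarrow> bool" where
  "topological_group G T \<longleftrightarrow> group G \<and> topspace T = carrier G \<and> Hausdorff_space T \<and>
     continuous_map (prod_topology T T) T (\<lambda>(x, y). x \<otimes>\<^bsub>G\<^esub> y) \<and>
     continuous_map T T (\<lambda>x. inv\<^bsub>G\<^esub> x)"

definition g_reversible :: "('a, 'b) monoid_scheme \<Rightarrow> 'a topology \<Rightarrow> bool" where
  "g_reversible G T \<longleftrightarrow> topological_group G T \<and>
     (\<forall>f. f \<in> iso G G \<and> continuous_map T T f \<longrightarrow> open_map T T f)"

definition Zplus :: "int set" where "Zplus = {z. z > 0}"
definition Zminus :: "int set" where "Zminus = UNIV - Zplus"

definition KZ_group :: "('a, 'b) monoid_scheme \<Rightarrow> (int \<Rightarrow> 'a) monoid" where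
  "KZ_group K = product_group (UNIV :: int set) (\<lambda>_. K)"

text \<open>The topology on K^Z transported from D \<times> C, where D = K^{Z_-} is discrete and
  C = K^{Z_+} carries the Tychonoff topology; the identification is
  x \<mapsto> (x restricted to Z_-, x restricted to Z_+).\<close>
definition KZ_topology :: "('a, 'b) monoid_scheme \<Rightarrow> 'a topology \<Rightarrow> (int \<Rightarrow> 'a) topology" where
  "KZ_topology K T = pullback_topology (carrier (KZ_group K))
     (\<lambda>x. (restrict x Zminus, restrict x Zplus))
     (prod_topology (discrete_topology (\<Pi>\<^sub>E i\<in>Zminus. carrier K))
                    (product_topology (\<lambda>_. T) Zplus))"

definition right_shift :: "(int \<Rightarrow> 'a) \<Rightarrow> (int \<Rightarrow> 'a)" where
  "right_shift x = (\<lambda>n. x (n - 1))"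

end

theory Submission imports Defs begin

text \<open>Everything except non-openness is coordinatewise: a map into K^Z is continuous as soon as
  its restriction to Z_- is continuous into the discrete space and each coordinate in Z_+ is
  continuous. For non-openness, fix t \<in> K and let U be the open set of sequences that are
  constantly t on Z_-. Its shift consists of the sequences constantly t on Z_- \<union> {1}, so if
  the shift were open, pulling this set back along s \<mapsto> (t, ..., t, s, t, ...) (with s at
  position 1) would make {t} open in K. Then K would be discrete and compact, hence finite.\<close>

lemma Hausdorff_space_pullback_topology:
  assumes "Hausdorff_space Y" "inj_on f A"
  shows "Hausdorff_space (pullback_topology A f Y)"
  unfolding Hausdorff_space_def topspace_pullback_topology
proof (intro allI impI)
  fix x y assume xy: "x \<in> f -` topspace Y \<inter> A \<and> y \<in> f -` topspace Y \<inter> A \<and> x \<noteq> y"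
  then have "f x \<noteq> f y" using assms(2) by (auto simp: inj_on_def)
  then obtain U V where UV: "openin Y U" "openin Y V" "f x \<in> U" "f y \<in> V" "disjnt U V"
    using assms(1) xy unfolding Hausdorff_space_def by blast
  show "\<exists>U V. openin (pullback_topology A f Y) U \<and> openin (pullback_topology A f Y) V
      \<and> x \<in> U \<and> y \<in> V \<and> disjnt U V"
    using UV xy
    by (intro exI[of _ "f -` U \<inter> A"] exI[of _ "f -` V \<inter> A"])
       (auto simp: openin_pullback_topology disjnt_def)
qed

lemma Zminus_iff: "n \<in> Zminus \<longleftrightarrow> n \<le> 0" and Zplus_iff: "n \<in> Zplus \<longleftrightarrow> n > 0"
  by (auto simp: Zminus_def Zplus_def)

lemma carrier_KZ_group: "carrier (KZ_group K) = {x. \<forall>n. x n \<in> carrier K}"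
  by (auto simp: KZ_group_def PiE_def Pi_def)

lemma mult_KZ_group: "x \<otimes>\<^bsub>KZ_group K\<^esub> y = (\<lambda>n. x n \<otimes>\<^bsub>K\<^esub> y n)"
  by (simp add: KZ_group_def restrict_def)

lemma right_shift_iso: "right_shift \<in> iso (KZ_group K) (KZ_group K)"
proof (rule isoI)
  show "right_shift \<in> hom (KZ_group K) (KZ_group K)"
    by (auto intro!: homI simp: carrier_KZ_group mult_KZ_group right_shift_def)
  show "bij_betw right_shift (carrier (KZ_group K)) (carrier (KZ_group K))"
    by (rule bij_betw_byWitness[where f' = "\<lambda>x n. x (n + 1)"])
       (auto simp: carrier_KZ_group right_shift_def)
qed

locale KZ_space =
  fixes K :: "('a, 'b) monoid_scheme" and T :: "'a topology"
  assumes topspace_eq_carrier: "topspace T = carrier K"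
begin

abbreviation Dminus :: "(int \<Rightarrow> 'a) topology" where
  "Dminus \<equiv> discrete_topology (\<Pi>\<^sub>E i\<in>Zminus. carrier K)"

lemma topspace_KZ_topology: "topspace (KZ_topology K T) = {x. \<forall>n. x n \<in> carrier K}"
  unfolding KZ_topology_def topspace_pullback_topology carrier_KZ_group
  by (auto simp: topspace_eq_carrier PiE_def Pi_def)

lemma continuous_map_into_KZ_topology:
  assumes "\<And>z n. z \<in> topspace Z \<Longrightarrow> g z n \<in> carrier K"
    and "continuous_map Z Dminus (\<lambda>z. restrict (g z) Zminus)"
    and "\<And>n. n \<in> Zplus \<Longrightarrow> continuous_map Z T (\<lambda>z. g z n)"
  shows "continuous_map Z (KZ_topology K T) g"
  unfolding KZ_topology_def
proof (rule continuous_map_pullback')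
  show "topspace Z \<subseteq> g -` carrier (KZ_group K)"
    using assms(1) by (auto simp: carrier_KZ_group)
  have "continuous_map Z (product_topology (\<lambda>_. T) Zplus) (\<lambda>z. restrict (g z) Zplus)"
    unfolding continuous_map_componentwise using assms(3) by auto
  then show "continuous_map Z (prod_topology Dminus (product_topology (\<lambda>_. T) Zplus))
      ((\<lambda>x. (restrict x Zminus, restrict x Zplus)) \<circ> g)"
    using assms(2) by (simp add: o_def continuous_map_pairedI)
qed

lemma continuous_map_restrict_Zminus:
  "continuous_map (KZ_topology K T) Dminus (\<lambda>x. restrict x Zminus)"
proof -
  have "continuous_map (KZ_topology K T) Dminus (fst \<circ> (\<lambda>x. (restrict x Zminus, restrict x Zplus)))"
    unfolding KZ_topology_def by (rule continuous_map_pullback) (rule continuous_map_fst)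
  then show ?thesis by (simp add: o_def)
qed

lemma continuous_map_through_Zminus:
  assumes "h \<in> (\<Pi>\<^sub>E i\<in>Zminus. carrier K) \<rightarrow> topspace Z"
  shows "continuous_map (KZ_topology K T) Z (\<lambda>x. h (restrict x Zminus))"
  using continuous_map_compose[OF continuous_map_restrict_Zminus, of Z h] assms
  by (simp add: o_def)

lemma continuous_map_KZ_coordinate: "continuous_map (KZ_topology K T) T (\<lambda>x. x n)"
proof (cases "n \<in> Zplus")
  case True
  have "continuous_map (KZ_topology K T) T
      ((\<lambda>p. snd p n) \<circ> (\<lambda>x. (restrict x Zminus, restrict x Zplus)))"
    unfolding KZ_topology_def
    by (rule continuous_map_pullback)
       (intro continuous_map_compose[OF continuous_map_snd, unfolded o_def]
         continuous_map_product_projection True)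
  then show ?thesis using True by (simp add: o_def)
next
  case False
  then have "n \<in> Zminus" by (simp add: Zminus_def)
  then show ?thesis
    using continuous_map_through_Zminus[of "\<lambda>a. a n" T] by (auto simp: topspace_eq_carrier)
qed

lemma Hausdorff_space_KZ_topology:
  assumes "Hausdorff_space T"
  shows "Hausdorff_space (KZ_topology K T)"
  unfolding KZ_topology_def
proof (rule Hausdorff_space_pullback_topology)
  show "Hausdorff_space (prod_topology Dminus (product_topology (\<lambda>_. T) Zplus))"
    using assms
    by (simp add: Hausdorff_space_prod_topology Hausdorff_space_product_topology
        Hausdorff_space_discrete_topology)
  show "inj_on (\<lambda>x. (restrict x Zminus, restrict x Zplus)) (carrier (KZ_group K))"
  proof (rule inj_onI)
    fix x y
    assume "(restrict x Zminus, restrict x Zplus) = (restrict y Zminus, restrict y Zplus)"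
    then have "x n = y n" for n
      by (metis Zminus_def Diff_iff UNIV_I prod.inject restrict_apply')
    then show "x = y" by auto
  qed
qed

lemma continuous_map_KZ_mult:
  assumes "topological_group K T"
  shows "continuous_map (prod_topology (KZ_topology K T) (KZ_topology K T)) (KZ_topology K T)
      (\<lambda>(x, y). x \<otimes>\<^bsub>KZ_group K\<^esub> y)"
proof -
  let ?X = "prod_topology (KZ_topology K T) (KZ_topology K T)"
  let ?A = "\<Pi>\<^sub>E i\<in>Zminus. carrier K"
  have grp: "group K" and mult: "continuous_map (prod_topology T T) T (\<lambda>(x, y). x \<otimes>\<^bsub>K\<^esub> y)"
    using assms by (auto simp: topological_group_def)
  have "continuous_map ?X (KZ_topology K T) (\<lambda>p n. fst p n \<otimes>\<^bsub>K\<^esub> snd p n)"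
  proof (rule continuous_map_into_KZ_topology)
    fix p n assume "p \<in> topspace ?X"
    then show "fst p n \<otimes>\<^bsub>K\<^esub> snd p n \<in> carrier K"
      by (auto simp: topspace_KZ_topology group.subgroup_self[OF grp] subgroup.m_closed)
  next
    have "continuous_map ?X (discrete_topology (?A \<times> ?A))
        (\<lambda>p. (restrict (fst p) Zminus, restrict (snd p) Zminus))"
      unfolding prod_topology_discrete_topology
      by (intro continuous_map_pairedI
          continuous_map_compose[OF continuous_map_fst continuous_map_restrict_Zminus, unfolded o_def]
          continuous_map_compose[OF continuous_map_snd continuous_map_restrict_Zminus, unfolded o_def])
    moreover have "continuous_map (discrete_topology (?A \<times> ?A)) Dminus
        (\<lambda>(a, b). restrict (\<lambda>n. a n \<otimes>\<^bsub>K\<^esub> b n) Zminus)"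
      by (auto simp: PiE_def Pi_def group.subgroup_self[OF grp] subgroup.m_closed)
    ultimately have "continuous_map ?X Dminus
        ((\<lambda>(a, b). restrict (\<lambda>n. a n \<otimes>\<^bsub>K\<^esub> b n) Zminus)
          \<circ> (\<lambda>p. (restrict (fst p) Zminus, restrict (snd p) Zminus)))"
      by (rule continuous_map_compose)
    then show "continuous_map ?X Dminus (\<lambda>p. restrict (\<lambda>n. fst p n \<otimes>\<^bsub>K\<^esub> snd p n) Zminus)"
      by (simp add: o_def restrict_def cong: if_cong)
  next
    fix n :: int
    have "continuous_map ?X (prod_topology T T) (\<lambda>p. (fst p n, snd p n))"
      by (intro continuous_map_pairedI
          continuous_map_compose[OF continuous_map_fst continuous_map_KZ_coordinate, unfolded o_def]
          continuous_map_compose[OF continuous_map_snd continuous_map_KZ_coordinate, unfolded o_def])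
    from continuous_map_compose[OF this mult]
    show "continuous_map ?X T (\<lambda>p. fst p n \<otimes>\<^bsub>K\<^esub> snd p n)"
      by (simp add: o_def)
  qed
  then show ?thesis by (simp add: case_prod_unfold mult_KZ_group)
qed

lemma continuous_map_KZ_inv:
  assumes "topological_group K T"
  shows "continuous_map (KZ_topology K T) (KZ_topology K T) (\<lambda>x. inv\<^bsub>KZ_group K\<^esub> x)"
proof -
  have grp: "group K" and inv: "continuous_map T T (\<lambda>x. inv\<^bsub>K\<^esub> x)"
    using assms by (auto simp: topological_group_def)
  have "continuous_map (KZ_topology K T) (KZ_topology K T) (\<lambda>x n. inv\<^bsub>K\<^esub> x n)"
  proof (rule continuous_map_into_KZ_topology)
    fix x n assume "x \<in> topspace (KZ_topology K T)"
    then show "inv\<^bsub>K\<^esub> x n \<in> carrier K"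
      by (auto simp: topspace_KZ_topology group.inv_closed[OF grp])
  next
    have "continuous_map (KZ_topology K T) Dminus
        (\<lambda>x. (\<lambda>a. restrict (\<lambda>n. inv\<^bsub>K\<^esub> a n) Zminus) (restrict x Zminus))"
      by (rule continuous_map_through_Zminus)
         (auto simp: PiE_def Pi_def extensional_def group.inv_closed[OF grp])
    then show "continuous_map (KZ_topology K T) Dminus (\<lambda>x. restrict (\<lambda>n. inv\<^bsub>K\<^esub> x n) Zminus)"
      by (simp add: restrict_def cong: if_cong)
  next
    fix n :: int
    show "continuous_map (KZ_topology K T) T (\<lambda>x. inv\<^bsub>K\<^esub> x n)"
      using continuous_map_compose[OF continuous_map_KZ_coordinate inv] by (simp add: o_def)
  qed
  moreover have "(\<lambda>n. inv\<^bsub>K\<^esub> x n) = inv\<^bsub>KZ_group K\<^esub> x" if "x \<in> topspace (KZ_topology K T)" for x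
    using that unfolding KZ_group_def
    by (subst inv_product_group) (auto simp: grp topspace_KZ_topology)
  ultimately show ?thesis by (rule continuous_map_eq)
qed

lemma topological_group_KZ:
  assumes "topological_group K T"
  shows "topological_group (KZ_group K) (KZ_topology K T)"
  using assms continuous_map_KZ_mult continuous_map_KZ_inv Hausdorff_space_KZ_topology
  unfolding topological_group_def
  by (simp add: KZ_group_def topspace_KZ_topology flip: carrier_KZ_group)

lemma continuous_map_right_shift:
  "continuous_map (KZ_topology K T) (KZ_topology K T) right_shift"
proof (rule continuous_map_into_KZ_topology)
  fix x n assume "x \<in> topspace (KZ_topology K T)"
  then show "right_shift x n \<in> carrier K"
    by (auto simp: topspace_KZ_topology right_shift_def)
next
  have "continuous_map (KZ_topology K T) Dminus
      (\<lambda>x. (\<lambda>a. restrict (\<lambda>n. a (n - 1)) Zminus) (restrict x Zminus))"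
    by (rule continuous_map_through_Zminus) (auto simp: PiE_def Pi_def extensional_def Zminus_iff)
  then show "continuous_map (KZ_topology K T) Dminus (\<lambda>x. restrict (right_shift x) Zminus)"
    by (simp add: restrict_def right_shift_def Zminus_iff cong: if_cong)
next
  fix n :: int
  show "continuous_map (KZ_topology K T) T (\<lambda>x. right_shift x n)"
    unfolding right_shift_def by (rule continuous_map_KZ_coordinate)
qed

lemma continuous_map_insert_at_positive:
  assumes "m \<in> Zplus" "t \<in> carrier K"
  shows "continuous_map T (KZ_topology K T) (\<lambda>s. (\<lambda>_. t)(m := s))"
proof (rule continuous_map_into_KZ_topology)
  fix s n assume "s \<in> topspace T"
  then show "((\<lambda>_. t)(m := s)) n \<in> carrier K"
    using assms(2) by (auto simp: topspace_eq_carrier)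
next
  have "restrict ((\<lambda>_. t)(m := s)) Zminus = restrict (\<lambda>_. t) Zminus" for s
    using assms(1) by (auto simp: Zminus_iff Zplus_iff)
  then show "continuous_map T Dminus (\<lambda>s. restrict ((\<lambda>_. t)(m := s)) Zminus)"
    using assms(2) by auto
next
  fix n :: int
  show "continuous_map T T (\<lambda>s. ((\<lambda>_. t)(m := s)) n)"
    using assms(2) by (cases "n = m") (auto simp: topspace_eq_carrier)
qed

lemma openin_singleton_if_open_map_right_shift:
  assumes "open_map (KZ_topology K T) (KZ_topology K T) right_shift" and t: "t \<in> carrier K"
  shows "openin T {t}"
proof -
  define U where "U = {x \<in> topspace (KZ_topology K T). restrict x Zminus \<in> {restrict (\<lambda>_. t) Zminus}}"
  have "openin (KZ_topology K T) U"
    unfolding U_def using t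
    by (intro openin_continuous_map_preimage[OF continuous_map_restrict_Zminus]) auto
  then have "openin (KZ_topology K T) (right_shift ` U)"
    using assms(1) by (simp add: open_map_def)
  from openin_continuous_map_preimage[OF continuous_map_insert_at_positive this]
  have "openin T {s \<in> topspace T. (\<lambda>_. t)(1 := s) \<in> right_shift ` U}"
    using t by (simp add: Zplus_iff)
  moreover have "{s \<in> topspace T. (\<lambda>_. t)(1 := s) \<in> right_shift ` U} = {t}"
  proof (intro equalityI subsetI)
    fix s assume "s \<in> {s \<in> topspace T. (\<lambda>_. t)(1 := s) \<in> right_shift ` U}"
    then obtain x where x: "x \<in> U" "(\<lambda>_. t)(1 := s) = right_shift x" by auto
    then have "s = x 0" by (metis fun_upd_same right_shift_def diff_self)
    moreover have "restrict x Zminus 0 = t" using x by (simp add: U_def Zminus_iff)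
    ultimately show "s \<in> {t}" by (simp add: Zminus_iff)
  next
    fix s assume "s \<in> {t}"
    moreover have "(\<lambda>_. t) \<in> U" using t by (auto simp: U_def topspace_KZ_topology)
    moreover have "(\<lambda>_. t)(1 := t) = right_shift (\<lambda>_. t)" by (simp add: right_shift_def fun_eq_iff)
    ultimately show "s \<in> {s \<in> topspace T. (\<lambda>_. t)(1 := s) \<in> right_shift ` U}"
      using t by (auto simp: topspace_eq_carrier)
  qed
  ultimately show ?thesis by simp
qed

lemma not_open_map_right_shift:
  assumes "infinite (carrier K)" and "compact_space T"
  shows "\<not> open_map (KZ_topology K T) (KZ_topology K T) right_shift"
proof
  assume "open_map (KZ_topology K T) (KZ_topology K T) right_shift"
  then have "discrete_topology (carrier K) = T"
    using openin_singleton_if_open_map_right_shift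
    by (simp add: discrete_topology_unique topspace_eq_carrier)
  then show False
    using assms compact_space_discrete_topology by metis
qed

end

theorem mainTheorem6:
  fixes K :: "('a, 'b) monoid_scheme" and T :: "'a topology"
  assumes "topological_group K T"
    and "infinite (carrier K)"
    and "compact_space T"
  shows "topological_group (KZ_group K) (KZ_topology K T)
       \<and> \<not> g_reversible (KZ_group K) (KZ_topology K T)
       \<and> right_shift \<in> iso (KZ_group K) (KZ_group K)
       \<and> continuous_map (KZ_topology K T) (KZ_topology K T) right_shift
       \<and> \<not> open_map (KZ_topology K T) (KZ_topology K T) right_shift"
proof -
  interpret KZ_space K T
    using assms(1) by unfold_locales (simp add: topological_group_def)
  show ?thesis
    using topological_group_KZ[OF assms(1)] right_shift_iso continuous_map_right_shift
      not_open_map_right_shift[OF assms(2,3)]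
    by (auto simp: g_reversible_def)
qed

end
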